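(* In the odd setting below, the determinant $D_k=\det N_k=\det(F^{(k)}_0,F^{(k)}_1,\dots,F^{(k)}_{2s})$ is invariant under the scaling, i.e. it is homogeneous of degree $0$.
   Context: Odd setting: integers $n\ge1$, $s\ge1$, $m=2s+1$; $a_k^0,\dots,a_k^{2s}$ are $n\times n$ matrices with indeterminate entries, $N$-periodic in $k$. $Q_k$ is the $mn\times mn$ block matrix with $I_n$ in blocks $(i+1,i)$, last block column $(a_k^0;\dots;a_k^{2s})$, $O_n$ elsewhere. $r_k=(a_k^0;O_n;a_k^2;O_n;\dots;O_n;a_k^{2s})$. $F^{(k)}_0=r_k$, $F^{(k)}_\ell=Q_k\cdots Q_{k+\ell-1}r_{k+\ell}$, $N_k=(F^{(k)}_0,\dots,F^{(k)}_{2s})$. The scaling, for $\mu>0$: $a_j^{2r+1}\mapsto\mu^{-1+r/s}a_j^{2r+1}$ ($r=0,\dots,s-1$) and $a_j^{2r}\mapsto\mu^{r/s}a_j^{2r}$ ($r=0,\dots,s$), for all $j$. A function of the entries is homogeneous of degree $d\in\mathbb Q$ if the scaling multiplies it by $\mu^d$ for all $\mu>0$. *)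

theory Defs
  imports "Jordan_Normal_Form.Determinant"
begin

text \<open>Coefficient data: a k i p q is the (p,q) entry (0-based) of the n x n
  matrix a_k^i, for period index k and i = 0..2s.  Entries are arbitrary reals
  (indeterminates are modelled by universally quantified real values).\<close>

type_synonym coeffs = "nat \<Rightarrow> nat \<Rightarrow> nat \<Rightarrow> nat \<Rightarrow> real"

text \<open>Block matrix Q_k of size (m n) x (m n), m = 2s+1: identity blocks at
  block positions (i+1,i), last block column (a_k^0; ...; a_k^{2s}).\<close>
definition Qmat :: "nat \<Rightarrow> nat \<Rightarrow> coeffs \<Rightarrow> nat \<Rightarrow> real mat" where
  "Qmat n s a k = (let m = 2*s+1 in
     mat (m*n) (m*n) (\<lambda>(i,j).
       if j div n = m - 1 then a k (i div n) (i mod n) (j mod n)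
       else if i div n = j div n + 1 \<and> i mod n = j mod n then 1 else 0))"

definition rmat :: "nat \<Rightarrow> nat \<Rightarrow> coeffs \<Rightarrow> nat \<Rightarrow> real mat" where
  "rmat n s a k = (let m = 2*s+1 in
     mat (m*n) n (\<lambda>(i,q). if even (i div n) then a k (i div n) (i mod n) q else 0))"

fun Qprod :: "nat \<Rightarrow> nat \<Rightarrow> coeffs \<Rightarrow> nat \<Rightarrow> nat \<Rightarrow> real mat" where
  "Qprod n s a k 0 = 1\<^sub>m ((2*s+1)*n)"
| "Qprod n s a k (Suc l) = Qprod n s a k l * Qmat n s a (k + l)"

definition Fmat :: "nat \<Rightarrow> nat \<Rightarrow> coeffs \<Rightarrow> nat \<Rightarrow> nat \<Rightarrow> real mat" where
  "Fmat n s a k l = Qprod n s a k l * rmat n s a (k + l)"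

definition Nmat :: "nat \<Rightarrow> nat \<Rightarrow> coeffs \<Rightarrow> nat \<Rightarrow> real mat" where
  "Nmat n s a k = (let m = 2*s+1 in
     mat (m*n) (m*n) (\<lambda>(i,j). Fmat n s a k (j div n) $$ (i, j mod n)))"

definition Dk :: "nat \<Rightarrow> nat \<Rightarrow> coeffs \<Rightarrow> nat \<Rightarrow> real" where
  "Dk n s a k = det (Nmat n s a k)"

definition scale :: "nat \<Rightarrow> real \<Rightarrow> coeffs \<Rightarrow> coeffs" where
  "scale s \<mu> a = (\<lambda>k i p q.
     (if even i then \<mu> powr (real (i div 2) / real s)
      else \<mu> powr (-1 + real (i div 2) / real s)) * a k i p q)"

end

theory Submission
  imports Defs
begin

(* Put t = \<mu> powr (1/(2s)) and D = diag(t^i I_n), i = 0..2s.  The scaled coefficients satisfy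
   Q_k' D = t^-1 D Q_k(\<lambda>) and r_k' = D r_k, where Q_k(\<lambda>) is Q_k with its even coefficients
   multiplied by \<lambda> = t^(2s+1); hence F_l' = t^-l D Q_k(\<lambda>) ... Q_(k+l-1)(\<lambda>) r_(k+l).
   Rescaling the even coefficients adds a multiple of r_k to the last block column of Q_k, and
   Q_k ... Q_(k+l-1) r_(k+l) = F_l is a block column of N_k; inductively Q_k(\<lambda>) ... Q_(k+l-1)(\<lambda>) differs from
   Q_k ... Q_(k+l-1) by N_k C with C zero on the block rows l, l+1, ....  Therefore
   N_k' = D N_k (I + Y) D^-1 with Y strictly block upper triangular, and det N_k' = det N_k. *)

definition block_cols :: "nat \<Rightarrow> nat \<Rightarrow> (nat \<Rightarrow> 'a mat) \<Rightarrow> 'a mat" where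
  "block_cols m n G = mat (m*n) (m*n) (\<lambda>(i,j). G (j div n) $$ (i, j mod n))"

definition unit_block :: "nat \<Rightarrow> nat \<Rightarrow> nat \<Rightarrow> 'a::zero_neq_one mat" where
  "unit_block m n l = mat (m*n) n (\<lambda>(i,q). if i = l*n + q then 1 else 0)"

definition last_block :: "nat \<Rightarrow> nat \<Rightarrow> 'a::zero mat \<Rightarrow> 'a mat" where
  "last_block m n B = block_cols m n (\<lambda>l. if l = m - 1 then B else 0\<^sub>m (m*n) n)"

definition block_powers :: "nat \<Rightarrow> nat \<Rightarrow> 'a::semiring_1 \<Rightarrow> 'a mat" where
  "block_powers m n t = mat_diag (m*n) (\<lambda>i. t ^ (i div n))"

definition rows_vanish_from :: "nat \<Rightarrow> nat \<Rightarrow> 'a::zero mat \<Rightarrow> bool" where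
  "rows_vanish_from n l C \<longleftrightarrow> (\<forall>i<dim_row C. \<forall>j<dim_col C. l \<le> i div n \<longrightarrow> C $$ (i,j) = 0)"

lemma block_cols_carrier [simp]: "block_cols m n G \<in> carrier_mat (m*n) (m*n)"
  by (simp add: block_cols_def)

lemma dim_block_cols [simp]:
  "dim_row (block_cols m n G) = m*n" "dim_col (block_cols m n G) = m*n"
  by (simp_all add: block_cols_def)

lemma index_block_cols [simp]:
  "i < m*n \<Longrightarrow> j < m*n \<Longrightarrow> block_cols m n G $$ (i,j) = G (j div n) $$ (i, j mod n)"
  by (simp add: block_cols_def)

lemma block_cols_cong:
  "(\<And>l. l < m \<Longrightarrow> G l = H l) \<Longrightarrow> block_cols m n G = block_cols m n H"
  unfolding block_cols_def by (rule cong_mat) (auto simp: less_mult_imp_div_less)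

lemma unit_block_carrier [simp]: "unit_block m n l \<in> carrier_mat (m*n) n"
  by (simp add: unit_block_def)

lemma block_powers_carrier [simp]: "block_powers m n t \<in> carrier_mat (m*n) (m*n)"
  by (simp add: block_powers_def)

lemma dim_block_powers [simp]:
  "dim_row (block_powers m n t) = m*n" "dim_col (block_powers m n t) = m*n"
  by (simp_all add: block_powers_def mat_diag_def)

lemma mult_block_cols:
  assumes A: "A \<in> carrier_mat (m*n) (m*n)" and G: "\<And>l. l < m \<Longrightarrow> G l \<in> carrier_mat (m*n) n"
  shows "A * block_cols m n G = block_cols m n (\<lambda>l. A * G l)" (is "?L = ?R")
proof (rule eq_matI)
  fix i j assume "i < dim_row ?R" "j < dim_col ?R"
  then have i: "i < m*n" and j: "j < m*n" by auto
  then have n: "j mod n < n" by (cases "n = 0") auto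
  have "col (block_cols m n G) j = col (G (j div n)) (j mod n)"
    using j n G[OF less_mult_imp_div_less[OF j]] by (intro eq_vecI) auto
  then show "?L $$ (i,j) = ?R $$ (i,j)"
    using i j n A G[OF less_mult_imp_div_less[OF j]] by simp
qed (use A in auto)

lemma add_block_cols:
  assumes "\<And>l. l < m \<Longrightarrow> G l \<in> carrier_mat (m*n) n" "\<And>l. l < m \<Longrightarrow> H l \<in> carrier_mat (m*n) n"
  shows "block_cols m n (\<lambda>l. G l + H l) = block_cols m n G + block_cols m n H" (is "?L = ?R")
proof (rule eq_matI)
  fix i j assume "i < dim_row ?R" "j < dim_col ?R"
  then have i: "i < m*n" and j: "j < m*n" by auto
  then have "j mod n < n" by (cases "n = 0") auto
  then show "?L $$ (i,j) = ?R $$ (i,j)"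
    using i j assms[OF less_mult_imp_div_less[OF j]] by simp
qed auto

lemma block_cols_smult_powers:
  fixes G :: "nat \<Rightarrow> 'a::comm_semiring_1 mat"
  assumes "\<And>l. l < m \<Longrightarrow> G l \<in> carrier_mat (m*n) n"
  shows "block_cols m n (\<lambda>l. c ^ l \<cdot>\<^sub>m G l) = block_cols m n G * block_powers m n c" (is "?L = ?R")
proof (rule eq_matI)
  fix i j assume "i < dim_row ?R" "j < dim_col ?R"
  then have i: "i < m*n" and j: "j < m*n" by auto
  then have "j mod n < n" by (cases "n = 0") auto
  then show "?L $$ (i,j) = ?R $$ (i,j)"
    using i j assms[OF less_mult_imp_div_less[OF j]]
    by (simp add: block_powers_def mat_diag_mult_right[OF block_cols_carrier] mult.commute)
qed auto

lemma block_cols_mult_unit_block: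
  fixes G :: "nat \<Rightarrow> 'a::semiring_1 mat"
  assumes G: "\<And>l. l < m \<Longrightarrow> G l \<in> carrier_mat (m*n) n" and l: "l < m"
  shows "block_cols m n G * unit_block m n l = G l"
proof (rule eq_matI)
  fix i q assume "i < dim_row (G l)" "q < dim_col (G l)"
  then have i: "i < m*n" and q: "q < n" using G[OF l] by auto
  have lq: "l*n + q < m*n"
  proof -
    have "l*n + q < (l+1)*n" using q by simp
    also have "\<dots> \<le> m*n" using l by (intro mult_right_mono) auto
    finally show ?thesis .
  qed
  have "(block_cols m n G * unit_block m n l) $$ (i,q)
      = (\<Sum>x<m*n. block_cols m n G $$ (i,x) * (if x = l*n + q then 1 else 0))"
    using i q by (simp add: scalar_prod_def unit_block_def atLeast0LessThan)
  also have "\<dots> = block_cols m n G $$ (i, l*n + q)"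
    using lq by (simp add: if_distrib[of "(*) _"] sum.delta cong: if_cong)
  also have "\<dots> = G l $$ (i,q)" using i lq q by simp
  finally show "(block_cols m n G * unit_block m n l) $$ (i,q) = G l $$ (i,q)" .
qed (use G[OF l] in \<open>auto simp: unit_block_def\<close>)

lemma block_powers_mult_inverse:
  fixes t :: "'a::field"
  assumes "t \<noteq> 0"
  shows "block_powers m n t * block_powers m n (inverse t) = 1\<^sub>m (m*n)"
  using assms by (simp add: block_powers_def power_inverse[symmetric] flip: power_mult_distrib)

lemma det_block_powers_conj:
  fixes t :: "'a::field"
  assumes "t \<noteq> 0" "A \<in> carrier_mat (m*n) (m*n)"
  shows "det (block_powers m n t * A * block_powers m n (inverse t)) = det A"
proof -
  let ?D = "block_powers m n t" and ?D' = "block_powers m n (inverse t)"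
  have "det (?D * A * ?D') = det A * (det ?D * det ?D')"
    unfolding det_mult[OF mult_carrier_mat[OF block_powers_carrier assms(2)] block_powers_carrier]
      det_mult[OF block_powers_carrier assms(2)] by (simp only: ac_simps)
  also have "det ?D * det ?D' = 1"
    using det_mult[OF block_powers_carrier block_powers_carrier, of m n t "inverse t"]
    by (simp add: block_powers_mult_inverse[OF assms(1)])
  finally show ?thesis by simp
qed

lemma rows_vanish_from_mono: "rows_vanish_from n l C \<Longrightarrow> l \<le> l' \<Longrightarrow> rows_vanish_from n l' C"
  unfolding rows_vanish_from_def by auto

lemma rows_vanish_from_mult:
  assumes "rows_vanish_from n l C" "dim_row B = dim_col C"
  shows "rows_vanish_from n l (C * B)"
  using assms unfolding rows_vanish_from_def by (auto simp: scalar_prod_def intro!: sum.neutral)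

lemma rows_vanish_from_add:
  fixes C D :: "'a::monoid_add mat"
  assumes "rows_vanish_from n l C" "rows_vanish_from n l D" "C \<in> carrier_mat r c" "D \<in> carrier_mat r c"
  shows "rows_vanish_from n l (C + D)"
  using assms unfolding rows_vanish_from_def by auto

lemma rows_vanish_from_smult:
  "rows_vanish_from n l (C :: 'a::mult_zero mat) \<Longrightarrow> rows_vanish_from n l (c \<cdot>\<^sub>m C)"
  unfolding rows_vanish_from_def by auto

lemma rows_vanish_from_zero: "rows_vanish_from n l (0\<^sub>m r c)"
  unfolding rows_vanish_from_def by auto

lemma rows_vanish_from_unit_block: "rows_vanish_from n (Suc l) (unit_block m n l)"
  unfolding rows_vanish_from_def unit_block_def by auto

lemma rows_vanish_from_block_cols:
  assumes "\<And>l. l < m \<Longrightarrow> G l \<in> carrier_mat (m*n) n \<and> rows_vanish_from n L (G l)"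
  shows "rows_vanish_from n L (block_cols m n G)"
  unfolding rows_vanish_from_def
proof (intro allI impI)
  fix i j assume "i < dim_row (block_cols m n G)" "j < dim_col (block_cols m n G)" "L \<le> i div n"
  then show "block_cols m n G $$ (i,j) = 0"
    using assms[OF less_mult_imp_div_less[of j m n]] unfolding rows_vanish_from_def
    by (cases "n = 0") auto
qed

lemma det_one_add_block_cols:
  fixes Y :: "nat \<Rightarrow> 'a::comm_ring_1 mat"
  assumes "\<And>l. l < m \<Longrightarrow> Y l \<in> carrier_mat (m*n) n \<and> rows_vanish_from n l (Y l)"
  shows "det (1\<^sub>m (m*n) + block_cols m n Y) = 1"
proof -
  let ?U = "1\<^sub>m (m*n) + block_cols m n Y"
  have lower: "?U $$ (i,j) = (if i = j then 1 else 0)" if "i < m*n" "j < m*n" "j \<le> i" for i j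
  proof -
    have "j div n \<le> i div n" using \<open>j \<le> i\<close> by (rule div_le_mono)
    moreover have "j mod n < n" using that by (cases "n = 0") auto
    ultimately have "Y (j div n) $$ (i, j mod n) = 0"
      using assms[OF less_mult_imp_div_less[OF \<open>j < m*n\<close>]] \<open>i < m*n\<close>
      unfolding rows_vanish_from_def by auto
    then show ?thesis using that by simp
  qed
  have "upper_triangular ?U" using lower by auto
  then have "det ?U = (\<Prod>i = 0..<m*n. ?U $$ (i,i))"
    by (simp add: det_upper_triangular[of _ "m*n"] prod_list_diag_prod)
  also have "\<dots> = 1" using lower by simp
  finally show ?thesis .
qed

lemma block_cols_column_operations:
  fixes F Y :: "nat \<Rightarrow> 'a::comm_ring_1 mat"
  assumes D: "D \<in> carrier_mat (m*n) (m*n)"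
    and F: "\<And>l. l < m \<Longrightarrow> F l \<in> carrier_mat (m*n) n"
    and Y: "\<And>l. l < m \<Longrightarrow> Y l \<in> carrier_mat (m*n) n"
  shows "block_cols m n (\<lambda>l. c ^ l \<cdot>\<^sub>m (D * (F l + block_cols m n F * Y l)))
    = D * (block_cols m n F * (1\<^sub>m (m*n) + block_cols m n Y)) * block_powers m n c"
proof -
  let ?N = "block_cols m n F"
  have G: "F l + ?N * Y l \<in> carrier_mat (m*n) n" if "l < m" for l
    by (rule add_carrier_mat[OF mult_carrier_mat[OF block_cols_carrier Y[OF that]]])
  have "block_cols m n (\<lambda>l. c ^ l \<cdot>\<^sub>m (D * (F l + ?N * Y l)))
      = D * block_cols m n (\<lambda>l. F l + ?N * Y l) * block_powers m n c"
    using D G by (simp add: block_cols_smult_powers mult_block_cols)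
  also have "block_cols m n (\<lambda>l. F l + ?N * Y l) = ?N + block_cols m n (\<lambda>l. ?N * Y l)"
    by (rule add_block_cols[OF F mult_carrier_mat[OF block_cols_carrier Y]])
  also have "\<dots> = ?N * 1\<^sub>m (m*n) + ?N * block_cols m n Y"
    by (simp add: mult_block_cols[OF block_cols_carrier Y])
  also have "\<dots> = ?N * (1\<^sub>m (m*n) + block_cols m n Y)"
    by (rule mult_add_distrib_mat[OF block_cols_carrier one_carrier_mat block_cols_carrier, symmetric])
  finally show ?thesis .
qed

lemma last_block_carrier [simp]: "last_block m n B \<in> carrier_mat (m*n) (m*n)"
  by (simp add: last_block_def)

lemma dim_last_block [simp]:
  "dim_row (last_block m n B) = m*n" "dim_col (last_block m n B) = m*n"
  by (simp_all add: last_block_def)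

lemma mult_last_block:
  fixes A :: "'a::semiring_0 mat"
  assumes "A \<in> carrier_mat (m*n) (m*n)" "B \<in> carrier_mat (m*n) n"
  shows "A * last_block m n B = last_block m n (A * B)"
  unfolding last_block_def using assms
  by (subst mult_block_cols) (auto intro!: block_cols_cong)

lemma rows_vanish_from_last_block:
  "B \<in> carrier_mat (m*n) n \<Longrightarrow> rows_vanish_from n L B \<Longrightarrow> rows_vanish_from n L (last_block m n B)"
  unfolding last_block_def by (rule rows_vanish_from_block_cols) (auto simp: rows_vanish_from_zero)

lemma smult_smult_mat: "a \<cdot>\<^sub>m (b \<cdot>\<^sub>m A) = (a * b :: 'a::semigroup_mult) \<cdot>\<^sub>m A"
  by (rule eq_matI) (simp_all add: mult.assoc)

lemma mult_add_perturbation: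
  fixes P N C Q X Z :: "'a::comm_ring mat"
  assumes "P \<in> carrier_mat M M" "N \<in> carrier_mat M M" "C \<in> carrier_mat M M"
    "Q \<in> carrier_mat M M" "X \<in> carrier_mat M M" "Z \<in> carrier_mat M M"
    and PX: "P * X = N * Z"
  shows "(P + N * C) * (Q + c \<cdot>\<^sub>m X) = P * Q + N * (C * Q + c \<cdot>\<^sub>m (Z + C * X))"
  using assms
  by (simp add: mult_add_distrib_mat[of _ M M _ M] add_mult_distrib_mat[of _ M M] mult_smult_distrib[of _ M M _ M]
      add_smult_distrib_left_mat[of _ M M] assoc_add_mat[of _ M M] mult_carrier_mat[of _ M M _ M] PX)

lemma Qmat_carrier [simp]: "Qmat n s a k \<in> carrier_mat ((2*s+1)*n) ((2*s+1)*n)"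
  by (simp add: Qmat_def Let_def)

lemma rmat_carrier [simp]: "rmat n s a k \<in> carrier_mat ((2*s+1)*n) n"
  by (simp add: rmat_def Let_def)

lemma Qprod_carrier [simp]: "Qprod n s a k l \<in> carrier_mat ((2*s+1)*n) ((2*s+1)*n)"
proof (induction l)
  case (Suc l)
  then show ?case using mult_carrier_mat[OF Suc Qmat_carrier] by simp
qed simp

lemma Fmat_carrier [simp]: "Fmat n s a k l \<in> carrier_mat ((2*s+1)*n) n"
  unfolding Fmat_def by (rule mult_carrier_mat[OF Qprod_carrier rmat_carrier])

lemma Nmat_eq_block_cols: "Nmat n s a k = block_cols (2*s+1) n (Fmat n s a k)"
  by (simp add: Nmat_def block_cols_def)

lemma Nmat_carrier [simp]: "Nmat n s a k \<in> carrier_mat ((2*s+1)*n) ((2*s+1)*n)"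
  unfolding Nmat_eq_block_cols by (rule block_cols_carrier)

lemma dim_Qmat_rmat_Qprod_Fmat_Nmat [simp]:
  "dim_row (Qmat n s a k) = (2*s+1)*n" "dim_col (Qmat n s a k) = (2*s+1)*n"
  "dim_row (rmat n s a k) = (2*s+1)*n" "dim_col (rmat n s a k) = n"
  "dim_row (Qprod n s a k l) = (2*s+1)*n" "dim_col (Qprod n s a k l) = (2*s+1)*n"
  "dim_row (Fmat n s a k l) = (2*s+1)*n" "dim_col (Fmat n s a k l) = n"
  "dim_row (Nmat n s a k) = (2*s+1)*n" "dim_col (Nmat n s a k) = (2*s+1)*n"
  by (metis carrier_matD Qmat_carrier rmat_carrier Qprod_carrier Fmat_carrier Nmat_carrier)+

definition scale_even :: "real \<Rightarrow> coeffs \<Rightarrow> coeffs" where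
  "scale_even c a = (\<lambda>k i p q. (if even i then c else 1) * a k i p q)"

lemma scale_eq_powers:
  assumes t: "t > 0" and s: "s \<ge> 1"
  shows "scale s (t ^ (2*s)) a
    = (\<lambda>k i p q. t ^ i * (if even i then 1 else inverse (t ^ (2*s+1))) * a k i p q)"
proof (intro ext)
  fix k i p q
  have base: "(t ^ (2*s)) powr x = t powr (2 * real s * x)" for x
    using t by (simp add: powr_powr flip: powr_realpow)
  show "scale s (t ^ (2*s)) a k i p q
    = t ^ i * (if even i then 1 else inverse (t ^ (2*s+1))) * a k i p q"
  proof (cases "even i")
    case True
    then have "2 * real s * (real (i div 2) / real s) = real i"
      using s by (auto elim: evenE)
    then show ?thesis using True t by (simp add: scale_def base powr_realpow)
  next
    case False
    then have "2 * real s * (-1 + real (i div 2) / real s) = real i - real (2*s+1)"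
      using s by (auto elim!: oddE simp: field_simps)
    then have "(t ^ (2*s)) powr (-1 + real (i div 2) / real s) = t ^ i * inverse (t ^ (2*s+1))"
      unfolding base by (simp only: powr_diff powr_realpow[OF t] divide_inverse)
    then show ?thesis using False by (simp add: scale_def)
  qed
qed

lemma Qmat_scale:
  assumes t: "t > 0" and s: "s \<ge> 1"
  shows "Qmat n s (scale s (t ^ (2*s)) a) k * block_powers (2*s+1) n t
    = inverse t \<cdot>\<^sub>m (block_powers (2*s+1) n t * Qmat n s (scale_even (t ^ (2*s+1)) a) k)"
    (is "?Q' * ?D = _ \<cdot>\<^sub>m (_ * ?Q)")
proof (rule eq_matI)
  fix i j assume "i < dim_row (inverse t \<cdot>\<^sub>m (?D * ?Q))" "j < dim_col (inverse t \<cdot>\<^sub>m (?D * ?Q))"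
  then have i: "i < (2*s+1)*n" and j: "j < (2*s+1)*n" by auto
  have "i div n < 2*s+1" using i by (rule less_mult_imp_div_less)
  then show "(?Q' * ?D) $$ (i,j) = (inverse t \<cdot>\<^sub>m (?D * ?Q)) $$ (i,j)"
    using i j t unfolding scale_eq_powers[OF t s]
    by (auto simp: block_powers_def mat_diag_mult_left[of _ _ "(2*s+1)*n"]
        mat_diag_mult_right[of _ "(2*s+1)*n"] Qmat_def Let_def scale_even_def field_simps power_add)
qed auto

lemma rmat_scale:
  assumes t: "t > 0" and s: "s \<ge> 1"
  shows "rmat n s (scale s (t ^ (2*s)) a) k = block_powers (2*s+1) n t * rmat n s a k"
  unfolding scale_eq_powers[OF t s]
  by (rule eq_matI) (auto simp: block_powers_def mat_diag_mult_left[of _ _ n] rmat_def Let_def)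

lemma Qprod_scale:
  assumes t: "t > 0" and s: "s \<ge> 1"
  shows "Qprod n s (scale s (t ^ (2*s)) a) k l * block_powers (2*s+1) n t
    = inverse t ^ l \<cdot>\<^sub>m (block_powers (2*s+1) n t * Qprod n s (scale_even (t ^ (2*s+1)) a) k l)"
proof (induction l)
  case 0
  show ?case by (rule eq_matI) auto
next
  case (Suc l)
  let ?D = "block_powers (2*s+1) n t"
  let ?P' = "Qprod n s (scale s (t ^ (2*s)) a) k l" and ?Q' = "Qmat n s (scale s (t ^ (2*s)) a) (k+l)"
  let ?P = "Qprod n s (scale_even (t ^ (2*s+1)) a) k l" and ?Q = "Qmat n s (scale_even (t ^ (2*s+1)) a) (k+l)"
  have "?P' * ?Q' * ?D = ?P' * (?Q' * ?D)"
    by (rule assoc_mult_mat[OF Qprod_carrier Qmat_carrier block_powers_carrier])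
  also have "\<dots> = inverse t \<cdot>\<^sub>m ((?P' * ?D) * ?Q)"
    unfolding Qmat_scale[OF t s]
      mult_smult_distrib[OF Qprod_carrier mult_carrier_mat[OF block_powers_carrier Qmat_carrier]]
      assoc_mult_mat[OF Qprod_carrier block_powers_carrier Qmat_carrier] ..
  also have "\<dots> = inverse t ^ Suc l \<cdot>\<^sub>m (?D * (?P * ?Q))"
    unfolding Suc.IH
      mult_smult_assoc_mat[OF mult_carrier_mat[OF block_powers_carrier Qprod_carrier] Qmat_carrier]
      assoc_mult_mat[OF block_powers_carrier Qprod_carrier Qmat_carrier] smult_smult_mat
    by simp
  finally show ?case by simp
qed

lemma Fmat_scale:
  assumes t: "t > 0" and s: "s \<ge> 1"
  shows "Fmat n s (scale s (t ^ (2*s)) a) k l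
    = inverse t ^ l \<cdot>\<^sub>m (block_powers (2*s+1) n t
        * (Qprod n s (scale_even (t ^ (2*s+1)) a) k l * rmat n s a (k+l)))"
proof -
  let ?D = "block_powers (2*s+1) n t"
  have "Fmat n s (scale s (t ^ (2*s)) a) k l = (Qprod n s (scale s (t ^ (2*s)) a) k l * ?D) * rmat n s a (k+l)"
    unfolding Fmat_def rmat_scale[OF t s]
    by (rule assoc_mult_mat[OF Qprod_carrier block_powers_carrier rmat_carrier, symmetric])
  then show ?thesis
    unfolding Qprod_scale[OF t s]
      mult_smult_assoc_mat[OF mult_carrier_mat[OF block_powers_carrier Qprod_carrier] rmat_carrier]
      assoc_mult_mat[OF block_powers_carrier Qprod_carrier rmat_carrier] .
qed

lemma Fmat_eq_Nmat_mult_unit_block: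
  "l \<le> 2*s \<Longrightarrow> Fmat n s a k l = Nmat n s a k * unit_block (2*s+1) n l"
  unfolding Nmat_eq_block_cols by (rule block_cols_mult_unit_block[symmetric]) auto

lemma Qmat_scale_even:
  "Qmat n s (scale_even c a) k = Qmat n s a k + (c - 1) \<cdot>\<^sub>m last_block (2*s+1) n (rmat n s a k)"
  (is "?L = ?R")
proof (rule eq_matI)
  fix i j assume "i < dim_row ?R" "j < dim_col ?R"
  then have i: "i < (2*s+1)*n" and j: "j < (2*s+1)*n" by auto
  then have "j mod n < n" by (cases "n = 0") auto
  then show "?L $$ (i,j) = ?R $$ (i,j)"
    using i j by (auto simp: Qmat_def rmat_def last_block_def scale_even_def Let_def algebra_simps)
qed auto

lemma Qprod_scale_even:
  assumes "l \<le> 2*s"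
  shows "\<exists>C \<in> carrier_mat ((2*s+1)*n) ((2*s+1)*n). rows_vanish_from n l C \<and>
    Qprod n s (scale_even c a) k l = Qprod n s a k l + Nmat n s a k * C"
  using assms
proof (induction l)
  case 0
  show ?case
    by (rule bexI[of _ "0\<^sub>m ((2*s+1)*n) ((2*s+1)*n)"]) (auto simp: rows_vanish_from_zero)
next
  case (Suc l)
  then obtain C where C: "C \<in> carrier_mat ((2*s+1)*n) ((2*s+1)*n)" "rows_vanish_from n l C"
    and IH: "Qprod n s (scale_even c a) k l = Qprod n s a k l + Nmat n s a k * C" by auto
  let ?P = "Qprod n s a k l" and ?Q = "Qmat n s a (k+l)" and ?N = "Nmat n s a k"
  let ?X = "last_block (2*s+1) n (rmat n s a (k+l))" and ?Z = "last_block (2*s+1) n (unit_block (2*s+1) n l)"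
  define C' where "C' = C * ?Q + (c - 1) \<cdot>\<^sub>m (?Z + C * ?X)"
  have "l \<le> 2*s" using Suc.prems by simp
  have PX: "?P * ?X = ?N * ?Z"
    unfolding mult_last_block[OF Qprod_carrier rmat_carrier] mult_last_block[OF Nmat_carrier unit_block_carrier]
      Fmat_def[symmetric] Fmat_eq_Nmat_mult_unit_block[OF \<open>l \<le> 2*s\<close>] ..
  have C': "C' \<in> carrier_mat ((2*s+1)*n) ((2*s+1)*n)"
    unfolding C'_def using C by auto
  have "rows_vanish_from n (Suc l) C'"
    unfolding C'_def
    by (intro rows_vanish_from_add rows_vanish_from_smult rows_vanish_from_mult
        rows_vanish_from_last_block rows_vanish_from_mono[OF C(2)] rows_vanish_from_unit_block
        unit_block_carrier mult_carrier_mat[OF C(1)] last_block_carrier Qmat_carrier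
        smult_carrier_mat add_carrier_mat) (use C in auto)
  moreover have "Qprod n s (scale_even c a) k (Suc l) = Qprod n s a k (Suc l) + ?N * C'"
    unfolding Qprod.simps IH Qmat_scale_even C'_def
    by (rule mult_add_perturbation[OF Qprod_carrier Nmat_carrier C(1) Qmat_carrier
          last_block_carrier last_block_carrier PX])
  ultimately show ?case using C' by blast
qed

lemma Nmat_scale_factorization:
  assumes t: "t > 0" and s: "s \<ge> 1"
  obtains Y where "\<And>l. l < 2*s+1 \<Longrightarrow> Y l \<in> carrier_mat ((2*s+1)*n) n \<and> rows_vanish_from n l (Y l)"
    and "Nmat n s (scale s (t ^ (2*s)) a) k = block_powers (2*s+1) n t
      * (Nmat n s a k * (1\<^sub>m ((2*s+1)*n) + block_cols (2*s+1) n Y)) * block_powers (2*s+1) n (inverse t)"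
proof -
  let ?M = "(2*s+1)*n" and ?N = "Nmat n s a k" and ?D = "block_powers (2*s+1) n t"
  let ?F = "Fmat n s a k"
  have "\<exists>Cl. l < 2*s+1 \<longrightarrow> Cl \<in> carrier_mat ?M ?M \<and> rows_vanish_from n l Cl \<and>
      Qprod n s (scale_even (t ^ (2*s+1)) a) k l = Qprod n s a k l + ?N * Cl" for l
    using Qprod_scale_even[of l s n "t ^ (2*s+1)" a k] by (cases "l < 2*s+1") auto
  then obtain C where C: "\<And>l. l < 2*s+1 \<Longrightarrow> C l \<in> carrier_mat ?M ?M \<and> rows_vanish_from n l (C l) \<and>
      Qprod n s (scale_even (t ^ (2*s+1)) a) k l = Qprod n s a k l + ?N * C l"
    by metis
  define Y where "Y l = C l * rmat n s a (k+l)" for l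
  have Y: "Y l \<in> carrier_mat ?M n \<and> rows_vanish_from n l (Y l)" if "l < 2*s+1" for l
    using C[OF that] unfolding Y_def by (auto intro: rows_vanish_from_mult)
  have F: "Fmat n s (scale s (t ^ (2*s)) a) k l = inverse t ^ l \<cdot>\<^sub>m (?D * (?F l + ?N * Y l))"
    if "l < 2*s+1" for l
  proof -
    have Cl: "C l \<in> carrier_mat ?M ?M" using C[OF that] by blast
    show ?thesis
      unfolding Fmat_scale[OF t s] C[OF that, THEN conjunct2, THEN conjunct2] Y_def Fmat_def[of n s a k l]
        add_mult_distrib_mat[OF Qprod_carrier mult_carrier_mat[OF Nmat_carrier Cl] rmat_carrier]
        assoc_mult_mat[OF Nmat_carrier Cl rmat_carrier] ..
  qed
  have "Nmat n s (scale s (t ^ (2*s)) a) k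
      = block_cols (2*s+1) n (\<lambda>l. inverse t ^ l \<cdot>\<^sub>m (?D * (?F l + ?N * Y l)))"
    unfolding Nmat_eq_block_cols[of n s "scale s (t ^ (2*s)) a" k] by (rule block_cols_cong) (rule F)
  also have "\<dots> = ?D * (?N * (1\<^sub>m ?M + block_cols (2*s+1) n Y)) * block_powers (2*s+1) n (inverse t)"
    unfolding Nmat_eq_block_cols[of n s a k]
    by (rule block_cols_column_operations[OF block_powers_carrier Fmat_carrier Y[THEN conjunct1]])
  finally show ?thesis using that Y by blast
qed

theorem mainTheorem7:
  fixes n s Np :: nat and a :: coeffs and \<mu> :: real and k :: nat
  assumes "n \<ge> 1" and "s \<ge> 1" and "Np \<ge> 1"
    and "\<And>j. a (j + Np) = a j"
    and "\<mu> > 0"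
  shows "Dk n s (scale s \<mu> a) k = Dk n s a k"
proof -
  define t where "t = \<mu> powr (1 / (2 * s))"
  have t: "t > 0" using \<open>\<mu> > 0\<close> by (simp add: t_def)
  have \<mu>: "\<mu> = t ^ (2*s)"
    using \<open>\<mu> > 0\<close> \<open>s \<ge> 1\<close> by (simp add: t_def powr_powr flip: powr_realpow)
  let ?M = "(2*s+1)*n"
  obtain Y where Y: "\<And>l. l < 2*s+1 \<Longrightarrow> Y l \<in> carrier_mat ?M n \<and> rows_vanish_from n l (Y l)"
    and N: "Nmat n s (scale s \<mu> a) k = block_powers (2*s+1) n t
      * (Nmat n s a k * (1\<^sub>m ?M + block_cols (2*s+1) n Y)) * block_powers (2*s+1) n (inverse t)"
    unfolding \<mu> using Nmat_scale_factorization[OF t \<open>s \<ge> 1\<close>] by metis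
  have U: "1\<^sub>m ?M + block_cols (2*s+1) n Y \<in> carrier_mat ?M ?M"
    by (rule add_carrier_mat[OF block_cols_carrier])
  have "Dk n s (scale s \<mu> a) k = det (Nmat n s a k * (1\<^sub>m ?M + block_cols (2*s+1) n Y))"
    unfolding Dk_def N using t by (intro det_block_powers_conj mult_carrier_mat[OF Nmat_carrier U]) simp
  also have "\<dots> = Dk n s a k"
    unfolding Dk_def det_mult[OF Nmat_carrier U] using det_one_add_block_cols[OF Y] by simp
  finally show ?thesis .
qed

end
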